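(* Let $(M,D_t)$ be a differential module of rank $\mathfrak r$ over $\mathcal O_t^\pm$, let $a\in{\mathscr D}_t^\pm(k)$, and let $m_1,\dots,m_{\mathfrak r}$ be a basis of the space of horizontal elements of $M$ at $a$. The following are equivalent: (1) $m_1,\dots,m_{\mathfrak r}$ is an optimal basis at $a$; (2) for every $r$, letting $J_r=\{j: \mathcal R_a(m_j)=r\}$, every nontrivial $k$-linear combination $\sum_{j\in J_r}\alpha_jm_j$ has radius of convergence $r$ at $a$; (3) for every nonzero horizontal element $m$ at $a$ with radius of convergence $r$, writing $m=\sum_{i=1}^{\mathfrak r}\beta_im_i$, one has $\mathcal R_a(m_i)\ge r$ for every $i$ with $\beta_i\ne0$, and $\mathcal R_a(m_i)=r$ for at least one such $i$.
   Context: $k$ is an algebraically closed field complete for a non-archimedean absolute value extending the $p$-adic one. ${\mathscr D}_t^\pm$ is the unit disc (open or closed) with ring $\mathcal O_t^\pm$; $\mathcal O_t(a,r^-)$ the ring of power series in $t-a$ converging on $|t-a|<r$. For $f\in k[[t-a]]$, $\mathcal R_a(f)=\sup\{r\in[0,1):f\in\mathcal O_t(a,r^-)\}$, for vectors the minimum over components. A differential module of rank $\mathfrak r$ is a free $\mathcal O_t^\pm$-module $M$ of rank $\mathfrak r$ with $k$-linear $D_t$, $D_t(gm)=\frac{dg}{dt}m+gD_t(m)$. A horizontal element at $a$ is an element of $\ker D_t$ on $M\otimes\mathcal O_t(a,r^-)$ for some $r>0$, identified with its coordinate vector in $k[[t-a]]^{\mathfrak r}$ with respect to a fixed basis of $M$;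 its radius of convergence is $\mathcal R_a$ of this vector (independent of the basis). The horizontal elements at $a$ form a $k$-vector space of dimension $\mathfrak r$. The multiradius at $a$ is $(\mathcal R_1,\dots,\mathcal R_{\mathfrak r})$ with $\mathcal R_i=\sup\{r\in(0,1]:\dim_k\ker(D_t|M\otimes\mathcal O_t(a,r^-))\ge\mathfrak r-i+1\}$; a basis of horizontal elements at $a$ is optimal if the radii of its elements can be rearranged to form the multiradius. *)

theory Defs
  imports "HOL-Analysis.Analysis" "HOL-Computational_Algebra.Formal_Power_Series"
          "HOL-Computational_Algebra.Polynomial" "HOL-Library.Function_Algebras"
begin

definition absk :: "'k::{field,metric_space} \<Rightarrow> real" where
  "absk x = dist x 0"

definition padic_alg_closed_complete_field :: "nat \<Rightarrow> ('k::{field,metric_space}) itself \<Rightarrow> bool" where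
  "padic_alg_closed_complete_field p (_ :: 'k itself) \<longleftrightarrow>
     prime p
   \<and> (\<forall>x y :: 'k. dist x y = absk (x - y))
   \<and> (\<forall>x y :: 'k. absk (x * y) = absk x * absk y)
   \<and> (\<forall>x y :: 'k. absk (x + y) \<le> max (absk x) (absk y))
   \<and> absk (of_nat p :: 'k) = 1 / real p
   \<and> (\<forall>X :: nat \<Rightarrow> 'k. Cauchy X \<longrightarrow> convergent X)
   \<and> (\<forall>q :: 'k poly. 0 < degree q \<longrightarrow> (\<exists>x. poly q x = 0))"

text \<open>A power series f in (t - c) lies in O_t(c, r^-) iff it converges on |t - c| < r,
  i.e. |f_n| rho^n tends to 0 for every 0 \<le> rho < r.\<close>
definition conv_lt :: "real \<Rightarrow> 'k::{field,metric_space} fps \<Rightarrow> bool" where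
  "conv_lt r f \<longleftrightarrow> (\<forall>\<rho>. 0 \<le> \<rho> \<and> \<rho> < r \<longrightarrow> (\<lambda>n. absk (fps_nth f n) * \<rho> ^ n) \<longlonglongrightarrow> 0)"

text \<open>Ring O_t^\<pm> of the unit disc (centred at 0): cl = True gives the cl disc
  (|f_n| \<rightarrow> 0), cl = False the open disc (O_t(0,1^-)).\<close>
definition in_Ot :: "bool \<Rightarrow> 'k::{field,metric_space} fps \<Rightarrow> bool" where
  "in_Ot cl f \<longleftrightarrow>
     (if cl then (\<lambda>n. absk (fps_nth f n)) \<longlonglongrightarrow> 0 else conv_lt 1 f)"

definition in_disc :: "bool \<Rightarrow> 'k::{field,metric_space} \<Rightarrow> bool" where
  "in_disc cl a \<longleftrightarrow> (if cl then absk a \<le> 1 else absk a < 1)"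

text \<open>Taylor expansion at a of a series in t: the series in (t - a).\<close>
definition expand_at :: "'k::{field,metric_space} \<Rightarrow> 'k fps \<Rightarrow> 'k fps" where
  "expand_at a f = Abs_fps (\<lambda>m. \<Sum>n. of_nat (n choose m) * fps_nth f n * a ^ (n - m))"

definition Rad :: "'k::{field,metric_space} fps \<Rightarrow> real" where
  "Rad f = Sup {r. 0 \<le> r \<and> r < 1 \<and> conv_lt r f}"

definition RadV :: "nat \<Rightarrow> (nat \<Rightarrow> 'k::{field,metric_space} fps) \<Rightarrow> real" where
  "RadV n Y = Min ((\<lambda>i. Rad (Y i)) ` {..<n})"

text \<open>A differential module of rank n over O_t^\<pm> is given, with respect to a fixed basis
  e_0..e_{n-1} of M, by its connection matrix G (D_t e_j = \<Sum>i G i j e_i), entries in O_t^\<pm>.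
  Elements of M \<otimes> O_t(a,r^-) are coordinate vectors Y :: nat \<Rightarrow> k[[t-a]] supported on {..<n}.\<close>
definition diff_module :: "bool \<Rightarrow> nat \<Rightarrow> (nat \<Rightarrow> nat \<Rightarrow> 'k::{field,metric_space} fps) \<Rightarrow> bool" where
  "diff_module cl n G \<longleftrightarrow> (\<forall>i<n. \<forall>j<n. in_Ot cl (G i j))"

definition Dt_at :: "nat \<Rightarrow> (nat \<Rightarrow> nat \<Rightarrow> 'k::{field,metric_space} fps) \<Rightarrow> 'k \<Rightarrow>
    (nat \<Rightarrow> 'k fps) \<Rightarrow> (nat \<Rightarrow> 'k fps)" where
  "Dt_at n G a Y = (\<lambda>i. if i < n then fps_deriv (Y i) + (\<Sum>j<n. expand_at a (G i j) * Y j) else 0)"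

definition ker_r :: "nat \<Rightarrow> (nat \<Rightarrow> nat \<Rightarrow> 'k::{field,metric_space} fps) \<Rightarrow> 'k \<Rightarrow> real \<Rightarrow>
    (nat \<Rightarrow> 'k fps) set" where
  "ker_r n G a r = {Y. (\<forall>i\<ge>n. Y i = 0) \<and> (\<forall>i<n. conv_lt r (Y i)) \<and> Dt_at n G a Y = 0}"

definition horizontal :: "nat \<Rightarrow> (nat \<Rightarrow> nat \<Rightarrow> 'k::{field,metric_space} fps) \<Rightarrow> 'k \<Rightarrow>
    (nat \<Rightarrow> 'k fps) set" where
  "horizontal n G a = (\<Union>r\<in>{r. 0 < r}. ker_r n G a r)"

definition hscale :: "'k::{field,metric_space} \<Rightarrow> (nat \<Rightarrow> 'k fps) \<Rightarrow> (nat \<Rightarrow> 'k fps)" where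
  "hscale c Y = (\<lambda>j. fps_const c * Y j)"

text \<open>Multiradius (R_1,...,R_n) at a; index i ranges over {1..n}.\<close>
definition multirad :: "nat \<Rightarrow> (nat \<Rightarrow> nat \<Rightarrow> 'k::{field,metric_space} fps) \<Rightarrow> 'k \<Rightarrow> nat \<Rightarrow> real" where
  "multirad n G a i = Sup {r. 0 < r \<and> r \<le> 1 \<and>
      n - i + 1 \<le> vector_space.dim (hscale :: 'k \<Rightarrow> _) (ker_r n G a r)}"

definition optimal_basis :: "nat \<Rightarrow> (nat \<Rightarrow> nat \<Rightarrow> 'k::{field,metric_space} fps) \<Rightarrow> 'k \<Rightarrow>
    (nat \<Rightarrow> nat \<Rightarrow> 'k fps) \<Rightarrow> bool" where
  "optimal_basis n G a m \<longleftrightarrow>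
     (\<exists>\<sigma>. bij_betw \<sigma> {1..n} {..<n} \<and> (\<forall>i\<in>{1..n}. RadV n (m (\<sigma> i)) = multirad n G a i))"

end

theory Submission
  imports Defs
begin

text \<open>The radius of convergence R is an ultrametric valuation on the space of horizontal
  elements: R(x + y) \<ge> min (R x) (R y), with equality when R x \<noteq> R y, and R(c x) = R x for
  c \<noteq> 0.  The multiradius only sees the dimensions of the filtration W_r = {y. r \<le> R y}.
  A basis is optimal iff it is adapted to this filtration, i.e. every W_r is spanned by the
  basis vectors it contains.  Condition (3) says that the radius of a combination is the
  least radius over its support, which is again adaptedness; by the strict ultrametric
  inequality it suffices to check it for combinations inside one level, which is (2).\<close>

lemma obtain_sorted_enumeration:
  fixes \<rho> :: "nat \<Rightarrow> 'a::linorder"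
  obtains \<sigma> where "bij_betw \<sigma> {1..n} {..<n}"
    and "\<And>i j. 1 \<le> i \<Longrightarrow> i \<le> j \<Longrightarrow> j \<le> n \<Longrightarrow> \<rho> (\<sigma> i) \<le> \<rho> (\<sigma> j)"
proof -
  define xs where "xs = sort_key \<rho> [0..<n]"
  have xs: "distinct xs" "set xs = {..<n}" "length xs = n" "sorted (map \<rho> xs)"
    by (auto simp: xs_def)
  define \<sigma> where "\<sigma> i = xs ! (i - 1)" for i
  have "bij_betw (\<lambda>i. i - 1) {1..n} {..<n}"
    by (rule bij_betw_byWitness[where f' = Suc]) auto
  moreover have "bij_betw ((!) xs) {..<n} {..<n}"
    using bij_betw_nth[OF xs(1)] xs(2,3) by simp
  ultimately have "bij_betw \<sigma> {1..n} {..<n}"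
    unfolding \<sigma>_def using bij_betw_trans by (fastforce simp: comp_def)
  moreover have "\<rho> (\<sigma> i) \<le> \<rho> (\<sigma> j)" if "1 \<le> i" "i \<le> j" "j \<le> n" for i j
    using sorted_nth_mono[OF xs(4), of "i - 1" "j - 1"] that xs(3) by (simp add: \<sigma>_def)
  ultimately show ?thesis
    using that by blast
qed

lemma card_ge_threshold_iff_sorted:
  fixes \<rho> :: "nat \<Rightarrow> 'a::linorder"
  assumes \<sigma>: "bij_betw \<sigma> {1..n} {..<n}"
    and sorted: "\<And>i j. 1 \<le> i \<Longrightarrow> i \<le> j \<Longrightarrow> j \<le> n \<Longrightarrow> \<rho> (\<sigma> i) \<le> \<rho> (\<sigma> j)"
    and i: "i \<in> {1..n}"
  shows "n - i + 1 \<le> card {j. j < n \<and> r \<le> \<rho> j} \<longleftrightarrow> r \<le> \<rho> (\<sigma> i)"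
proof
  assume "r \<le> \<rho> (\<sigma> i)"
  have "\<sigma> ` {i..n} \<subseteq> {j. j < n \<and> r \<le> \<rho> j}"
  proof
    fix j assume "j \<in> \<sigma> ` {i..n}"
    then obtain k where k: "k \<in> {i..n}" "j = \<sigma> k"
      by auto
    have "\<sigma> k < n"
      using k i \<sigma> by (auto simp: bij_betw_def)
    moreover have "r \<le> \<rho> (\<sigma> k)"
      using \<open>r \<le> \<rho> (\<sigma> i)\<close> sorted[of i k] k i by auto
    ultimately show "j \<in> {j. j < n \<and> r \<le> \<rho> j}"
      using k by simp
  qed
  then have "card (\<sigma> ` {i..n}) \<le> card {j. j < n \<and> r \<le> \<rho> j}"
    by (rule card_mono[rotated]) simp
  moreover have "card (\<sigma> ` {i..n}) = n - i + 1"
    using i inj_on_subset[OF bij_betw_imp_inj_on[OF \<sigma>]] by (simp add: card_image Suc_diff_le)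
  ultimately show "n - i + 1 \<le> card {j. j < n \<and> r \<le> \<rho> j}"
    by simp
next
  assume card_ge: "n - i + 1 \<le> card {j. j < n \<and> r \<le> \<rho> j}"
  show "r \<le> \<rho> (\<sigma> i)"
  proof (rule ccontr)
    assume "\<not> r \<le> \<rho> (\<sigma> i)"
    have "{j. j < n \<and> r \<le> \<rho> j} \<subseteq> \<sigma> ` {Suc i..n}"
    proof
      fix j assume j: "j \<in> {j. j < n \<and> r \<le> \<rho> j}"
      then have "j \<in> \<sigma> ` {1..n}"
        using \<sigma> by (simp add: bij_betw_def)
      then obtain k where k: "k \<in> {1..n}" "j = \<sigma> k"
        by blast
      have "\<not> k \<le> i"
        using sorted[of k i] k i j \<open>\<not> r \<le> \<rho> (\<sigma> i)\<close> by auto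
      then show "j \<in> \<sigma> ` {Suc i..n}"
        using k by auto
    qed
    then have "card {j. j < n \<and> r \<le> \<rho> j} \<le> card (\<sigma> ` {Suc i..n})"
      by (rule card_mono[rotated]) simp
    also have "\<dots> \<le> card {Suc i..n}"
      by (rule card_image_le) simp
    finally show False
      using card_ge i by simp
  qed
qed

section \<open>Ultrametric radius functions\<close>

locale radius_function = vector_space scale
  for scale :: "'a::field \<Rightarrow> 'b::ab_group_add \<Rightarrow> 'b" (infixr \<open>*s\<close> 75) +
  fixes R :: "'b \<Rightarrow> real"
  assumes R_add_ge_min: "min (R x) (R y) \<le> R (x + y)"
    and R_scale: "c \<noteq> 0 \<Longrightarrow> R (c *s x) = R x"
    and R_zero: "R 0 = 1"
begin

lemma R_uminus: "R (- x) = R x"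
  using R_scale[of "- 1" x] by simp

lemma R_le_1: "R x \<le> 1"
  using R_add_ge_min[of x "- x"] by (simp add: R_uminus R_zero)

lemma R_add_eq_left:
  assumes "R x < R y"
  shows "R (x + y) = R x"
proof -
  have "min (R (x + y)) (R y) \<le> R x"
    using R_add_ge_min[of "x + y" "- y"] by (simp add: R_uminus)
  then show ?thesis
    using assms R_add_ge_min[of x y] by linarith
qed

lemma R_sum_ge:
  assumes "finite A" "t \<le> 1" "\<And>i. i \<in> A \<Longrightarrow> c i \<noteq> 0 \<Longrightarrow> t \<le> R (v i)"
  shows "t \<le> R (\<Sum>i\<in>A. c i *s v i)"
  using assms
proof (induction A rule: finite_induct)
  case empty
  then show ?case
    by (simp add: R_zero)
next
  case (insert a A)
  have "t \<le> R (c a *s v a)"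
    using insert.prems by (cases "c a = 0") (auto simp: R_zero R_scale)
  moreover have "t \<le> R (\<Sum>i\<in>A. c i *s v i)"
    using insert by auto
  ultimately show ?case
    using insert.hyps R_add_ge_min[of "c a *s v a" "\<Sum>i\<in>A. c i *s v i"] by simp
qed

end

locale radius_basis = radius_function +
  fixes m :: "nat \<Rightarrow> 'b" and n :: nat
  assumes independent_basis: "independent (m ` {..<n})"
    and inj_basis: "inj_on m {..<n}"
    and R_pos: "y \<in> span (m ` {..<n}) \<Longrightarrow> 0 < R y"
begin

abbreviation V :: "'b set" where
  "V \<equiv> span (m ` {..<n})"

definition filtration :: "real \<Rightarrow> 'b set" where
  "filtration r = {y \<in> V. r \<le> R y}"

definition indices_ge :: "real \<Rightarrow> nat set" where
  "indices_ge r = {j. j < n \<and> r \<le> R (m j)}"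

definition multiradius :: "nat \<Rightarrow> real" where
  "multiradius i = Sup {r. 0 < r \<and> r \<le> 1 \<and> n - i + 1 \<le> dim (filtration r)}"

definition optimal :: bool where
  "optimal \<longleftrightarrow>
     (\<exists>\<sigma>. bij_betw \<sigma> {1..n} {..<n} \<and> (\<forall>i\<in>{1..n}. R (m (\<sigma> i)) = multiradius i))"

definition adapted :: bool where
  "adapted \<longleftrightarrow> (\<forall>r. 0 < r \<and> r \<le> 1 \<longrightarrow> filtration r \<subseteq> span (m ` indices_ge r))"

definition level_sums_keep_radius :: bool where
  "level_sums_keep_radius \<longleftrightarrow> (\<forall>r. \<forall>\<alpha> :: nat \<Rightarrow> 'a.
     (\<exists>j\<in>{j. j < n \<and> R (m j) = r}. \<alpha> j \<noteq> 0) \<longrightarrow>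
     R (\<Sum>j\<in>{j. j < n \<and> R (m j) = r}. \<alpha> j *s m j) = r)"

definition radius_min_on_support :: bool where
  "radius_min_on_support \<longleftrightarrow> (\<forall>y \<in> V. y \<noteq> 0 \<longrightarrow>
     (\<forall>\<beta> :: nat \<Rightarrow> 'a. y = (\<Sum>i<n. \<beta> i *s m i) \<longrightarrow>
        (\<forall>i<n. \<beta> i \<noteq> 0 \<longrightarrow> R y \<le> R (m i)) \<and> (\<exists>i<n. \<beta> i \<noteq> 0 \<and> R (m i) = R y)))"

lemma basis_coeffs_unique:
  assumes "(\<Sum>i<n. \<beta> i *s m i) = (\<Sum>i<n. \<gamma> i *s m i)" "i < n"
  shows "\<beta> i = \<gamma> i"
proof -
  define u where "u v = \<beta> (inv_into {..<n} m v) - \<gamma> (inv_into {..<n} m v)" for v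
  have "(\<Sum>v\<in>m ` {..<n}. u v *s v) = (\<Sum>i<n. (\<beta> i - \<gamma> i) *s m i)"
    using inj_basis by (simp add: sum.reindex u_def)
  also have "\<dots> = 0"
    using assms(1) by (simp add: scale_left_diff_distrib sum_subtractf)
  finally have "u (m i) = 0"
    using independentD[OF independent_basis] assms(2) by blast
  then show ?thesis
    using inj_basis assms(2) by (simp add: u_def)
qed

lemma obtain_basis_coeffs:
  assumes "A \<subseteq> {..<n}" "y \<in> span (m ` A)"
  obtains \<gamma> where "y = (\<Sum>i\<in>A. \<gamma> i *s m i)"
proof -
  have "finite A"
    using assms(1) finite_subset by blast
  then obtain u where "y = (\<Sum>v\<in>m ` A. u v *s v)"
    using assms(2) span_finite[of "m ` A"] by auto
  also have "\<dots> = (\<Sum>i\<in>A. u (m i) *s m i)"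
    using inj_on_subset[OF inj_basis assms(1)] by (simp add: sum.reindex)
  finally show ?thesis
    by (rule that)
qed

lemma sum_basis_in_span_iff:
  assumes "A \<subseteq> {..<n}"
  shows "(\<Sum>i<n. \<beta> i *s m i) \<in> span (m ` A) \<longleftrightarrow> (\<forall>i<n. \<beta> i \<noteq> 0 \<longrightarrow> i \<in> A)"
proof
  assume "(\<Sum>i<n. \<beta> i *s m i) \<in> span (m ` A)"
  then obtain \<gamma> where "(\<Sum>i<n. \<beta> i *s m i) = (\<Sum>i\<in>A. \<gamma> i *s m i)"
    using assms by (auto elim: obtain_basis_coeffs)
  also have "\<dots> = (\<Sum>i<n. (if i \<in> A then \<gamma> i else 0) *s m i)"
    using assms by (intro sum.mono_neutral_cong_left) auto
  finally have "\<beta> i = (if i \<in> A then \<gamma> i else 0)" if "i < n" for i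
    using that by (rule basis_coeffs_unique)
  then show "\<forall>i<n. \<beta> i \<noteq> 0 \<longrightarrow> i \<in> A"
    by auto
next
  assume "\<forall>i<n. \<beta> i \<noteq> 0 \<longrightarrow> i \<in> A"
  then have "(\<Sum>i<n. \<beta> i *s m i) = (\<Sum>i\<in>A. \<beta> i *s m i)"
    using assms by (intro sum.mono_neutral_cong_right) auto
  also have "\<dots> \<in> span (m ` A)"
    by (intro span_sum span_scale span_base) auto
  finally show "(\<Sum>i<n. \<beta> i *s m i) \<in> span (m ` A)" .
qed

lemma obtain_min_radius_in_support:
  assumes "(\<Sum>i<n. \<beta> i *s m i) \<noteq> 0"
  obtains i0 where "i0 < n" "\<beta> i0 \<noteq> 0"
    and "\<And>i. i < n \<Longrightarrow> \<beta> i \<noteq> 0 \<Longrightarrow> R (m i0) \<le> R (m i)"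
    and "R (m i0) \<le> R (\<Sum>i<n. \<beta> i *s m i)"
proof -
  let ?support = "{i. i < n \<and> \<beta> i \<noteq> 0}"
  have "?support \<noteq> {}"
    using assms by (auto intro: sum.neutral)
  then obtain i0 where "is_arg_min (\<lambda>i. R (m i)) (\<lambda>i. i \<in> ?support) i0"
    using ex_is_arg_min_if_finite[of ?support] by auto
  then have i0: "i0 < n" "\<beta> i0 \<noteq> 0" "\<And>i. i < n \<Longrightarrow> \<beta> i \<noteq> 0 \<Longrightarrow> R (m i0) \<le> R (m i)"
    by (auto simp: is_arg_min_linorder)
  moreover have "R (m i0) \<le> R (\<Sum>i<n. \<beta> i *s m i)"
    using i0 by (intro R_sum_ge R_le_1) auto
  ultimately show ?thesis
    by (rule that)
qed

lemma radius_min_imp_level_sums: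
  assumes "radius_min_on_support"
  shows "level_sums_keep_radius"
  unfolding level_sums_keep_radius_def
proof (intro allI impI)
  fix r and \<alpha> :: "nat \<Rightarrow> 'a"
  define J where "J = {j. j < n \<and> R (m j) = r}"
  assume "\<exists>j\<in>{j. j < n \<and> R (m j) = r}. \<alpha> j \<noteq> 0"
  then obtain j0 where j0: "j0 \<in> J" "\<alpha> j0 \<noteq> 0"
    unfolding J_def by blast
  define \<beta> where "\<beta> i = (if i \<in> J then \<alpha> i else 0)" for i
  have y: "(\<Sum>j\<in>J. \<alpha> j *s m j) = (\<Sum>i<n. \<beta> i *s m i)"
    unfolding \<beta>_def J_def by (intro sum.mono_neutral_cong_left) auto
  have "(\<Sum>i<n. \<beta> i *s m i) \<noteq> 0"
    using basis_coeffs_unique[of \<beta> "\<lambda>_. 0" j0] j0 by (auto simp: \<beta>_def J_def)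
  moreover have "(\<Sum>i<n. \<beta> i *s m i) \<in> V"
    by (intro span_sum span_scale span_base) auto
  ultimately obtain i where "i < n" "\<beta> i \<noteq> 0" "R (m i) = R (\<Sum>i<n. \<beta> i *s m i)"
    using assms unfolding radius_min_on_support_def by blast
  then show "R (\<Sum>j\<in>{j. j < n \<and> R (m j) = r}. \<alpha> j *s m j) = r"
    using y unfolding J_def \<beta>_def by (auto split: if_splits)
qed

lemma level_sums_imp_radius_min:
  assumes level: "level_sums_keep_radius"
  shows "radius_min_on_support"
  unfolding radius_min_on_support_def
proof (intro ballI impI allI)
  fix y \<beta>
  assume "y \<noteq> 0" and y: "y = (\<Sum>i<n. \<beta> i *s m i)"
  then obtain i0 where i0: "i0 < n" "\<beta> i0 \<noteq> 0"
    and least: "\<And>i. i < n \<Longrightarrow> \<beta> i \<noteq> 0 \<Longrightarrow> R (m i0) \<le> R (m i)"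
    using obtain_min_radius_in_support by blast
  define J where "J = {j. j < n \<and> R (m j) = R (m i0)}"
  define \<beta>' where "\<beta>' i = (if i \<in> J then 0 else \<beta> i)" for i
  define y1 where "y1 = (\<Sum>j\<in>J. \<beta> j *s m j)"
  define y2 where "y2 = (\<Sum>i<n. \<beta>' i *s m i)"
  have "y = (\<Sum>i<n. (if i \<in> J then \<beta> i *s m i else 0) + \<beta>' i *s m i)"
    unfolding y \<beta>'_def by (intro sum.cong) auto
  also have "\<dots> = y1 + y2"
    unfolding y1_def y2_def sum.distrib sum.inter_restrict[OF finite_lessThan, symmetric]
    by (simp add: J_def Int_def)
  finally have y_split: "y = y1 + y2" .
  have R_y1: "R y1 = R (m i0)"
    using level i0 unfolding level_sums_keep_radius_def y1_def J_def by auto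
  have "R y = R (m i0)"
  proof (cases "y2 = 0")
    case True
    then show ?thesis
      using y_split R_y1 by simp
  next
    case False
    then obtain i where "i < n" "\<beta>' i \<noteq> 0" "R (m i) \<le> R y2"
      unfolding y2_def by (rule obtain_min_radius_in_support)
    then have "R y1 < R y2"
      using least[of i] R_y1 by (fastforce simp: \<beta>'_def J_def split: if_splits)
    then show ?thesis
      using y_split R_y1 R_add_eq_left by simp
  qed
  then show "(\<forall>i<n. \<beta> i \<noteq> 0 \<longrightarrow> R y \<le> R (m i)) \<and> (\<exists>i<n. \<beta> i \<noteq> 0 \<and> R (m i) = R y)"
    using i0 least by auto
qed

lemma radius_min_imp_adapted:
  assumes min: "radius_min_on_support"
  shows "adapted"
  unfolding adapted_def
proof (intro allI impI subsetI)
  fix r y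
  assume "y \<in> filtration r"
  then have yV: "y \<in> V" and r: "r \<le> R y"
    by (auto simp: filtration_def)
  obtain \<beta> where y: "y = (\<Sum>i<n. \<beta> i *s m i)"
    using obtain_basis_coeffs[OF order_refl yV] by blast
  show "y \<in> span (m ` indices_ge r)"
  proof (cases "y = 0")
    case True
    then show ?thesis
      by (simp add: span_zero)
  next
    case False
    with min yV y have "\<forall>i<n. \<beta> i \<noteq> 0 \<longrightarrow> R y \<le> R (m i)"
      unfolding radius_min_on_support_def by blast
    with r have "\<forall>i<n. \<beta> i \<noteq> 0 \<longrightarrow> i \<in> indices_ge r"
      by (auto simp: indices_ge_def)
    then show ?thesis
      unfolding y by (subst sum_basis_in_span_iff) (auto simp: indices_ge_def)
  qed
qed

lemma adapted_imp_radius_min: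
  assumes "adapted"
  shows "radius_min_on_support"
  unfolding radius_min_on_support_def
proof (intro ballI impI allI)
  fix y \<beta>
  assume yV: "y \<in> V" and "y \<noteq> 0" and y: "y = (\<Sum>i<n. \<beta> i *s m i)"
  have "y \<in> filtration (R y)"
    using yV by (simp add: filtration_def)
  then have "(\<Sum>i<n. \<beta> i *s m i) \<in> span (m ` indices_ge (R y))"
    using assms R_pos[OF yV] R_le_1 unfolding adapted_def y[symmetric] by blast
  then have above: "\<forall>i<n. \<beta> i \<noteq> 0 \<longrightarrow> R y \<le> R (m i)"
    by (subst (asm) sum_basis_in_span_iff) (auto simp: indices_ge_def)
  obtain i where "i < n" "\<beta> i \<noteq> 0" "R (m i) \<le> R y"
    using obtain_min_radius_in_support \<open>y \<noteq> 0\<close> unfolding y by blast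
  with above show "(\<forall>i<n. \<beta> i \<noteq> 0 \<longrightarrow> R y \<le> R (m i)) \<and> (\<exists>i<n. \<beta> i \<noteq> 0 \<and> R (m i) = R y)"
    by force
qed

lemma basis_indices_ge_in_filtration: "m ` indices_ge r \<subseteq> filtration r"
  by (auto simp: indices_ge_def filtration_def intro: span_base)

lemma independent_basis_indices_ge: "independent (m ` indices_ge r)"
  by (rule independent_mono[OF independent_basis]) (auto simp: indices_ge_def)

lemma card_basis_indices_ge: "card (m ` indices_ge r) = card (indices_ge r)"
  by (rule card_image, rule inj_on_subset[OF inj_basis]) (auto simp: indices_ge_def)

lemma independent_card_le_dim_filtration:
  assumes "T \<subseteq> filtration r" "independent T"
  shows "finite T \<and> card T \<le> dim (filtration r)"
proof -
  obtain B where B: "B \<subseteq> filtration r" "independent B" "filtration r \<subseteq> span B"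
    "card B = dim (filtration r)"
    using basis_exists by blast
  have "B \<subseteq> V"
    using B(1) by (auto simp: filtration_def)
  then have "finite B"
    using independent_span_bound[of "m ` {..<n}" B] B(2) by auto
  with independent_span_bound[of B T] assms B show ?thesis
    by auto
qed

lemma dim_filtration_le: "dim (filtration r) \<le> n"
proof -
  have "dim (filtration r) \<le> card (m ` {..<n})"
    by (rule dim_le_card) (auto simp: filtration_def)
  also have "\<dots> \<le> n"
    using card_image_le[of "{..<n}" m] by simp
  finally show ?thesis .
qed

lemma adapted_imp_dim_filtration:
  assumes "adapted" "0 < r" "r \<le> 1"
  shows "dim (filtration r) = card (indices_ge r)"
  using basis_card_eq_dim[OF basis_indices_ge_in_filtration _ independent_basis_indices_ge]
    assms card_basis_indices_ge unfolding adapted_def by simp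

lemma le_multiradius:
  assumes "0 < r" "r \<le> 1" "n - i + 1 \<le> dim (filtration r)"
  shows "r \<le> multiradius i"
  unfolding multiradius_def using assms by (intro cSup_upper bdd_aboveI[of _ 1]) auto

lemma optimal_imp_dim_filtration_le:
  assumes "optimal" "0 < r" "r \<le> 1"
  shows "dim (filtration r) \<le> card (indices_ge r)"
proof -
  obtain \<sigma> where \<sigma>: "bij_betw \<sigma> {1..n} {..<n}"
    and R_\<sigma>: "\<And>i. i \<in> {1..n} \<Longrightarrow> R (m (\<sigma> i)) = multiradius i"
    using assms(1) unfolding optimal_def by blast
  define d where "d = dim (filtration r)"
  \<comment> \<open>The indices i with n - i + 1 \<le> d, whose multiradius is at least r.\<close>
  have top: "{n - d + 1..n} \<subseteq> {1..n}"
    by auto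
  have "\<sigma> ` {n - d + 1..n} \<subseteq> indices_ge r"
  proof
    fix j assume "j \<in> \<sigma> ` {n - d + 1..n}"
    then obtain i where i: "i \<in> {n - d + 1..n}" "j = \<sigma> i"
      by auto
    have "r \<le> multiradius i"
      using assms(2,3) i dim_filtration_le[of r] by (intro le_multiradius) (auto simp: d_def)
    then show "j \<in> indices_ge r"
      using i top R_\<sigma>[of i] \<sigma> by (auto simp: indices_ge_def bij_betw_def)
  qed
  then have "card (\<sigma> ` {n - d + 1..n}) \<le> card (indices_ge r)"
    by (rule card_mono[rotated]) (simp add: indices_ge_def)
  moreover have "card (\<sigma> ` {n - d + 1..n}) = d"
    using card_image[OF inj_on_subset[OF bij_betw_imp_inj_on[OF \<sigma>] top]]
      dim_filtration_le[of r] by (simp add: d_def)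
  ultimately show ?thesis
    by (simp add: d_def)
qed

lemma optimal_imp_adapted:
  assumes "optimal"
  shows "adapted"
  unfolding adapted_def
proof (intro allI impI subsetI)
  fix r y
  assume r: "0 < r \<and> r \<le> 1" and y: "y \<in> filtration r"
  show "y \<in> span (m ` indices_ge r)"
  proof (rule ccontr)
    assume y_out: "y \<notin> span (m ` indices_ge r)"
    then have "y \<notin> m ` indices_ge r"
      using span_base by blast
    moreover have "independent (insert y (m ` indices_ge r))"
      using y_out independent_basis_indices_ge independent_insert by auto
    ultimately have "card (indices_ge r) + 1 \<le> dim (filtration r)"
      using independent_card_le_dim_filtration[of "insert y (m ` indices_ge r)" r] y
        basis_indices_ge_in_filtration card_basis_indices_ge by auto
    with optimal_imp_dim_filtration_le[OF assms] r show False
      by fastforce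
  qed
qed

lemma adapted_imp_optimal:
  assumes "adapted"
  shows "optimal"
proof -
  obtain \<sigma> where \<sigma>: "bij_betw \<sigma> {1..n} {..<n}"
    and sorted: "\<And>i j. 1 \<le> i \<Longrightarrow> i \<le> j \<Longrightarrow> j \<le> n \<Longrightarrow> R (m (\<sigma> i)) \<le> R (m (\<sigma> j))"
    using obtain_sorted_enumeration[of n "\<lambda>j. R (m j)"] by blast
  have "R (m (\<sigma> i)) = multiradius i" if i: "i \<in> {1..n}" for i
  proof -
    have "0 < R (m (\<sigma> i))"
      using i \<sigma> by (intro R_pos span_base) (auto simp: bij_betw_def)
    moreover have "{r. 0 < r \<and> r \<le> 1 \<and> n - i + 1 \<le> dim (filtration r)} =
        {0<..R (m (\<sigma> i))}"
      using card_ge_threshold_iff_sorted[where \<rho> = "\<lambda>j. R (m j)", OF \<sigma> sorted i] adapted_imp_dim_filtration[OF assms]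
        R_le_1[of "m (\<sigma> i)"] unfolding indices_ge_def by force
    ultimately show ?thesis
      unfolding multiradius_def by simp
  qed
  with \<sigma> show ?thesis
    unfolding optimal_def by blast
qed

theorem optimal_iff_level_sums_keep_radius: "optimal \<longleftrightarrow> level_sums_keep_radius"
  using optimal_imp_adapted adapted_imp_optimal adapted_imp_radius_min radius_min_imp_adapted
    radius_min_imp_level_sums level_sums_imp_radius_min by blast

theorem optimal_iff_radius_min_on_support: "optimal \<longleftrightarrow> radius_min_on_support"
  using optimal_imp_adapted adapted_imp_optimal adapted_imp_radius_min radius_min_imp_adapted
  by blast

end

section \<open>Radii of convergence of horizontal elements\<close>

lemma absk_nonneg: "0 \<le> absk x"
  by (simp add: absk_def)

lemma conv_lt_mono: "conv_lt r f \<Longrightarrow> s \<le> r \<Longrightarrow> conv_lt s f"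
  by (simp add: conv_lt_def)

lemma conv_lt_add:
  fixes f g :: "'k::{field,metric_space} fps"
  assumes triangle: "\<And>x y :: 'k. absk (x + y) \<le> absk x + absk y"
    and "conv_lt r f" "conv_lt r g"
  shows "conv_lt r (f + g)"
  unfolding conv_lt_def
proof (intro allI impI)
  fix \<rho> :: real
  assume \<rho>: "0 \<le> \<rho> \<and> \<rho> < r"
  have lim: "(\<lambda>j. absk (fps_nth f j) * \<rho> ^ j + absk (fps_nth g j) * \<rho> ^ j) \<longlonglongrightarrow> 0"
    using assms(2,3) \<rho> unfolding conv_lt_def by (intro tendsto_add_zero) auto
  have bound: "norm (absk (fps_nth (f + g) j) * \<rho> ^ j)
      \<le> absk (fps_nth f j) * \<rho> ^ j + absk (fps_nth g j) * \<rho> ^ j" for j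
  proof -
    have "norm (absk (fps_nth (f + g) j) * \<rho> ^ j) = absk (fps_nth f j + fps_nth g j) * \<rho> ^ j"
      using \<rho> absk_nonneg[of "fps_nth f j + fps_nth g j"] by (simp add: abs_mult)
    also have "\<dots> \<le> (absk (fps_nth f j) + absk (fps_nth g j)) * \<rho> ^ j"
      using triangle \<rho> by (intro mult_right_mono) auto
    finally show ?thesis
      by (simp add: distrib_right)
  qed
  show "(\<lambda>j. absk (fps_nth (f + g) j) * \<rho> ^ j) \<longlonglongrightarrow> 0"
    by (intro Lim_null_comparison[OF _ lim] always_eventually allI bound)
qed

lemma conv_lt_scale_iff:
  fixes f :: "'k::{field,metric_space} fps"
  assumes mult: "\<And>x y :: 'k. absk (x * y) = absk x * absk y" and "c \<noteq> 0"
  shows "conv_lt r (fps_const c * f) \<longleftrightarrow> conv_lt r f"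
proof -
  have "absk c \<noteq> 0"
    using \<open>c \<noteq> 0\<close> by (simp add: absk_def)
  then have "(\<lambda>j. absk c * (absk (fps_nth f j) * \<rho> ^ j)) \<longlonglongrightarrow> 0 \<longleftrightarrow>
      (\<lambda>j. absk (fps_nth f j) * \<rho> ^ j) \<longlonglongrightarrow> 0" for \<rho> :: real
    using tendsto_mult_left_iff[of "absk c" _ 0] by simp
  then show ?thesis
    unfolding conv_lt_def by (simp add: mult mult.assoc)
qed

lemma Rad_nonneg: "0 \<le> Rad f"
  unfolding Rad_def by (rule cSup_upper) (auto simp: conv_lt_def intro: bdd_aboveI[of _ 1])

lemma Rad_le_1: "Rad f \<le> 1"
  unfolding Rad_def by (rule cSup_least) (auto simp: conv_lt_def intro!: exI[of _ 0])

lemma conv_lt_iff_le_Rad: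
  assumes "0 < r" "r \<le> 1"
  shows "conv_lt r f \<longleftrightarrow> r \<le> Rad f"
proof
  have bdd: "bdd_above {r. 0 \<le> r \<and> r < 1 \<and> conv_lt r f}"
    by (auto intro: bdd_aboveI[of _ 1])
  {
    assume "conv_lt r f"
    then show "r \<le> Rad f"
      unfolding Rad_def using assms
      by (intro dense_le_bounded[OF assms(1)] cSup_upper[OF _ bdd]) (auto intro: conv_lt_mono)
  }
  assume "r \<le> Rad f"
  show "conv_lt r f"
    unfolding conv_lt_def
  proof (intro allI impI)
    fix \<rho> :: real
    assume \<rho>: "0 \<le> \<rho> \<and> \<rho> < r"
    then have "\<rho> < Sup {r. 0 \<le> r \<and> r < 1 \<and> conv_lt r f}"
      using \<open>r \<le> Rad f\<close> unfolding Rad_def by simp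
    moreover have "0 \<in> {r. 0 \<le> r \<and> r < 1 \<and> conv_lt r f}"
      by (auto simp: conv_lt_def)
    ultimately obtain s where "conv_lt s f" "\<rho> < s"
      using less_cSup_iff[OF _ bdd] by blast
    then show "(\<lambda>j. absk (fps_nth f j) * \<rho> ^ j) \<longlonglongrightarrow> 0"
      using \<rho> unfolding conv_lt_def by auto
  qed
qed

lemma Rad_add_ge_min:
  fixes f g :: "'k::{field,metric_space} fps"
  assumes triangle: "\<And>x y :: 'k. absk (x + y) \<le> absk x + absk y"
  shows "min (Rad f) (Rad g) \<le> Rad (f + g)"
proof (cases "min (Rad f) (Rad g) = 0")
  case True
  then show ?thesis
    using Rad_nonneg by simp
next
  case False
  then have s: "0 < min (Rad f) (Rad g)" "min (Rad f) (Rad g) \<le> 1"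
    using Rad_nonneg[of f] Rad_nonneg[of g] Rad_le_1[of f] by linarith+
  then have "conv_lt (min (Rad f) (Rad g)) f" "conv_lt (min (Rad f) (Rad g)) g"
    by (simp_all add: conv_lt_iff_le_Rad)
  then have "conv_lt (min (Rad f) (Rad g)) (f + g)"
    by (rule conv_lt_add[OF triangle])
  with s show ?thesis
    by (simp add: conv_lt_iff_le_Rad)
qed

lemma Rad_scale:
  fixes f :: "'k::{field,metric_space} fps"
  assumes "\<And>x y :: 'k. absk (x * y) = absk x * absk y" "c \<noteq> 0"
  shows "Rad (fps_const c * f) = Rad f"
  unfolding Rad_def using conv_lt_scale_iff[OF assms] by simp

lemma Rad_zero: "Rad (0 :: 'k::{field,metric_space} fps) = 1"
  using conv_lt_iff_le_Rad[of 1 "0 :: 'k fps"] Rad_le_1[of "0 :: 'k fps"]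
  by (simp add: conv_lt_def absk_def)

lemma RadV_le_Rad: "i < n \<Longrightarrow> RadV n Y \<le> Rad (Y i)"
  unfolding RadV_def by simp

lemma RadV_ge_iff: "0 < n \<Longrightarrow> r \<le> RadV n Y \<longleftrightarrow> (\<forall>i<n. r \<le> Rad (Y i))"
  unfolding RadV_def by (subst Min_ge_iff) auto

lemma ker_r_eq_horizontal_RadV_ge:
  fixes G :: "nat \<Rightarrow> nat \<Rightarrow> 'k::{field,metric_space} fps"
  assumes "0 < n" "0 < r" "r \<le> 1"
  shows "ker_r n G a r = {Y \<in> horizontal n G a. r \<le> RadV n Y}"
proof (intro set_eqI iffI)
  fix Y
  assume Y: "Y \<in> ker_r n G a r"
  then have "\<forall>i<n. r \<le> Rad (Y i)"
    using conv_lt_iff_le_Rad[OF assms(2,3)] unfolding ker_r_def by blast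
  with Y assms show "Y \<in> {Y \<in> horizontal n G a. r \<le> RadV n Y}"
    using RadV_ge_iff unfolding horizontal_def by blast
next
  fix Y
  assume "Y \<in> {Y \<in> horizontal n G a. r \<le> RadV n Y}"
  then obtain r' where "Y \<in> ker_r n G a r'" "r \<le> RadV n Y"
    unfolding horizontal_def by blast
  then show "Y \<in> ker_r n G a r"
    using RadV_ge_iff[OF assms(1)] conv_lt_iff_le_Rad[OF assms(2,3)] unfolding ker_r_def by auto
qed

lemma RadV_pos_horizontal:
  fixes G :: "nat \<Rightarrow> nat \<Rightarrow> 'k::{field,metric_space} fps"
  assumes "0 < n" "Y \<in> horizontal n G a"
  shows "0 < RadV n Y"
proof -
  obtain r where r: "0 < r" "Y \<in> ker_r n G a r"
    using assms(2) unfolding horizontal_def by blast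
  then have "\<forall>i<n. min r 1 \<le> Rad (Y i)"
    using conv_lt_mono[of r _ "min r 1"] conv_lt_iff_le_Rad[of "min r 1"] unfolding ker_r_def by auto
  then have "min r 1 \<le> RadV n Y"
    using RadV_ge_iff[OF assms(1)] by blast
  moreover have "0 < min r 1"
    using r(1) by simp
  ultimately show ?thesis
    by linarith
qed

lemma vector_space_hscale: "vector_space (hscale :: 'k::{field,metric_space} \<Rightarrow> (nat \<Rightarrow> 'k fps) \<Rightarrow> _)"
  by unfold_locales (simp_all add: hscale_def fun_eq_iff fps_eq_iff algebra_simps)

lemma radius_function_RadV:
  assumes mult: "\<And>x y :: 'k::{field,metric_space}. absk (x * y) = absk x * absk y"
    and triangle: "\<And>x y :: 'k. absk (x + y) \<le> absk x + absk y"
    and "0 < n"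
  shows "radius_function (hscale :: 'k \<Rightarrow> _) (RadV n)"
proof -
  interpret vector_space "hscale :: 'k \<Rightarrow> (nat \<Rightarrow> 'k fps) \<Rightarrow> _"
    by (rule vector_space_hscale)
  show ?thesis
  proof
    fix x y :: "nat \<Rightarrow> 'k fps" and c :: 'k
    have "min (RadV n x) (RadV n y) \<le> Rad (x i + y i)" if "i < n" for i
      using RadV_le_Rad[OF that, of x] RadV_le_Rad[OF that, of y] Rad_add_ge_min[OF triangle]
      by (meson min.mono order_trans)
    then have "\<forall>i<n. min (RadV n x) (RadV n y) \<le> Rad ((x + y) i)"
      by (simp add: plus_fun_def)
    then show "min (RadV n x) (RadV n y) \<le> RadV n (x + y)"
      using RadV_ge_iff[OF \<open>0 < n\<close>] by blast
    show "RadV n (hscale c x) = RadV n x" if "c \<noteq> 0"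
      unfolding RadV_def hscale_def using Rad_scale[OF mult that] by simp
    show "RadV n 0 = 1"
      using \<open>0 < n\<close> by (simp add: RadV_def Rad_zero image_constant)
  qed
qed

lemma radius_basis_horizontal:
  fixes G :: "nat \<Rightarrow> nat \<Rightarrow> 'k::{field,metric_space} fps" and m :: "nat \<Rightarrow> nat \<Rightarrow> 'k fps"
  assumes "\<And>x y :: 'k. absk (x * y) = absk x * absk y"
    and "\<And>x y :: 'k. absk (x + y) \<le> absk x + absk y"
    and "0 < n" "inj_on m {..<n}" "\<not> module.dependent (hscale :: 'k \<Rightarrow> _) (m ` {..<n})"
    and "module.span (hscale :: 'k \<Rightarrow> _) (m ` {..<n}) = horizontal n G a"
  shows "radius_basis hscale (RadV n) m n"
proof -
  interpret radius_function "hscale :: 'k \<Rightarrow> _" "RadV n"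
    using assms(1-3) by (rule radius_function_RadV)
  show ?thesis
    by unfold_locales (use assms RadV_pos_horizontal in auto)
qed

lemma optimal_basis_iff_radius_basis_optimal:
  fixes G :: "nat \<Rightarrow> nat \<Rightarrow> 'k::{field,metric_space} fps" and m :: "nat \<Rightarrow> nat \<Rightarrow> 'k fps"
  assumes "radius_basis hscale (RadV n) m n" "0 < n"
    and "module.span (hscale :: 'k \<Rightarrow> _) (m ` {..<n}) = horizontal n G a"
  shows "optimal_basis n G a m \<longleftrightarrow> radius_basis.optimal hscale (RadV n) m n"
proof -
  interpret radius_basis hscale "RadV n" m n
    by (rule assms(1))
  have "ker_r n G a r = filtration r" if "0 < r" "r \<le> 1" for r
    using ker_r_eq_horizontal_RadV_ge[OF assms(2) that] assms(3) unfolding filtration_def by auto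
  then have "multirad n G a = multiradius"
    unfolding multirad_def multiradius_def by (intro ext arg_cong[where f = Sup]) auto
  then show ?thesis
    unfolding optimal_basis_def optimal_def by simp
qed

lemma absk_mult:
  assumes "padic_alg_closed_complete_field p TYPE('k::{field,metric_space})"
  shows "absk (x * y :: 'k) = absk x * absk y"
  using assms unfolding padic_alg_closed_complete_field_def by blast

lemma absk_triangle:
  assumes "padic_alg_closed_complete_field p TYPE('k::{field,metric_space})"
  shows "absk (x + y :: 'k) \<le> absk x + absk y"
proof -
  have "absk (x + y) \<le> max (absk x) (absk y)"
    using assms unfolding padic_alg_closed_complete_field_def by blast
  then show ?thesis
    using absk_nonneg[of x] absk_nonneg[of y] by linarith
qed

theorem lemma3p7:
  fixes p :: nat and cl :: bool and n :: nat
    and G :: "nat \<Rightarrow> nat \<Rightarrow> 'k::{field,metric_space} fps"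
    and a :: 'k and m :: "nat \<Rightarrow> nat \<Rightarrow> 'k fps"
  assumes "padic_alg_closed_complete_field p TYPE('k)"
    and "diff_module cl n G"
    and "in_disc cl a"
    and "\<forall>j<n. m j \<in> horizontal n G a"
    and "inj_on m {..<n}"
    and "\<not> module.dependent (hscale :: 'k \<Rightarrow> _) (m ` {..<n})"
    and "module.span (hscale :: 'k \<Rightarrow> _) (m ` {..<n}) = horizontal n G a"
  shows "(optimal_basis n G a m
          \<longleftrightarrow> (\<forall>r. \<forall>\<alpha> :: nat \<Rightarrow> 'k.
                 (\<exists>j\<in>{j. j < n \<and> RadV n (m j) = r}. \<alpha> j \<noteq> 0) \<longrightarrow>
                 RadV n (\<Sum>j\<in>{j. j < n \<and> RadV n (m j) = r}. hscale (\<alpha> j) (m j)) = r))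
       \<and> (optimal_basis n G a m
          \<longleftrightarrow> (\<forall>y \<in> horizontal n G a. y \<noteq> 0 \<longrightarrow>
                 (\<forall>\<beta> :: nat \<Rightarrow> 'k. y = (\<Sum>i<n. hscale (\<beta> i) (m i)) \<longrightarrow>
                    (\<forall>i<n. \<beta> i \<noteq> 0 \<longrightarrow> RadV n y \<le> RadV n (m i))
                  \<and> (\<exists>i<n. \<beta> i \<noteq> 0 \<and> RadV n (m i) = RadV n y))))"
proof (cases "n = 0")
  case True
  \<comment> \<open>Here RadV 0 is a Min over the empty set, so the radius axioms are not available;
    but every condition holds trivially.\<close>
  interpret vector_space "hscale :: 'k \<Rightarrow> (nat \<Rightarrow> 'k fps) \<Rightarrow> _"
    by (rule vector_space_hscale)
  have "optimal_basis n G a m"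
    unfolding optimal_basis_def using True by (intro exI[of _ id]) simp
  moreover have "horizontal n G a = {0}"
    using assms(7) True by simp
  ultimately show ?thesis
    using True by auto
next
  case False
  have basis: "radius_basis hscale (RadV n) m n"
    using radius_basis_horizontal[OF absk_mult[OF assms(1)] absk_triangle[OF assms(1)]]
      False assms(5-7) by blast
  interpret radius_basis hscale "RadV n" m n
    by (rule basis)
  have "optimal_basis n G a m \<longleftrightarrow> optimal"
    using optimal_basis_iff_radius_basis_optimal[OF basis] False assms(7) by simp
  then show ?thesis
    using optimal_iff_level_sums_keep_radius optimal_iff_radius_min_on_support
    unfolding level_sums_keep_radius_def radius_min_on_support_def assms(7) by simp
qed

end
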